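(* Let $(\tau_i)_{i\in\mathbb{N}}$ be i.i.d. nonnegative strictly $\beta$-stable random variables, $\beta\in(0,1)$. Let $T(0)=0$, $T(n)=\tau_1+\dots+\tau_n$ and $N_t=\max\{n\ge0: T(n)\le t\}$. Then there is a constant $M$ such that for each $t\ge0$, $$E\left[\frac{N_{nt}}{n^\beta}\right]\le t^\beta M\quad\text{for all } n\ge1.$$ *)

theory Defs
  imports "HOL-Probability.Probability" "HOL-Probability.Convolution"
begin

fun conv_pow :: "real measure \<Rightarrow> nat \<Rightarrow> real measure" where
  "conv_pow \<mu> 0 = return borel 0"
| "conv_pow \<mu> (Suc n) = convolution \<mu> (conv_pow \<mu> n)"

definition strictly_stable :: "real \<Rightarrow> real measure \<Rightarrow> bool" where
  "strictly_stable \<beta> \<mu> \<longleftrightarrow>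
     prob_space \<mu> \<and> sets \<mu> = sets borel \<and> \<mu> \<noteq> return borel 0 \<and>
     (\<forall>n::nat\<ge>1. conv_pow \<mu> n = distr \<mu> borel (\<lambda>x. real n powr (1/\<beta>) * x))"

definition partial_sum :: "(nat \<Rightarrow> 'a \<Rightarrow> real) \<Rightarrow> nat \<Rightarrow> 'a \<Rightarrow> real" where
  "partial_sum \<tau> n \<omega> = (\<Sum>i=1..n. \<tau> i \<omega>)"

text \<open>Counting process N_t = max {n \<ge> 0. T(n) \<le> t}, taken in enat (value \<infinity> if unbounded).\<close>
definition count_proc :: "(nat \<Rightarrow> 'a \<Rightarrow> real) \<Rightarrow> real \<Rightarrow> 'a \<Rightarrow> enat" where
  "count_proc \<tau> t \<omega> = Sup {enat n | n. partial_sum \<tau> n \<omega> \<le> t}"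

end

theory Submission
  imports Defs
begin

text \<open>Since \<open>N\<^sub>s \<le> \<Sum>\<^sub>k\<^sub>\<ge>\<^sub>1 [T(k) \<le> s]\<close>, the expectation of \<open>N\<^sub>s\<close> is at most
  \<open>\<Sum>\<^sub>k P(T(k) \<le> s)\<close>. Let \<open>F\<close> be the distribution function of \<open>\<tau>\<^sub>1\<close>. Strict stability gives
  \<open>P(T(k) \<le> s) = F(s / k\<^sup>1\<^sup>/\<^sup>\<beta>)\<close>, while independence and nonnegativity give
  \<open>P(T(m) \<le> y) \<le> F(y)\<^sup>m\<close>; together \<open>F(y / m\<^sup>1\<^sup>/\<^sup>\<beta>) \<le> F(y)\<^sup>m\<close>. Nondegeneracy provides
  \<open>y\<^sub>0 > 0\<close> with \<open>F(y\<^sub>0) < 1\<close>, and comparing with \<open>m = \<lfloor>k (y\<^sub>0/s)\<^sup>\<beta>\<rfloor>\<close> shows that the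
  \<open>k\<close>-th term decays geometrically in \<open>k (y\<^sub>0/s)\<^sup>\<beta>\<close>. Hence the series is \<open>O(s\<^sup>\<beta>)\<close>,
  and \<open>s = n t\<close> gives the claim.\<close>

lemma suminf_exp_power_le:
  fixes u :: real
  assumes "u > 0"
  shows "summable (\<lambda>j. exp (- u) ^ Suc j)" and "(\<Sum>j. exp (- u) ^ Suc j) \<le> 1 / u"
proof -
  define x where "x = exp (- u)"
  have x: "0 < x" "x < 1" using assms unfolding x_def by auto
  show "summable (\<lambda>j. exp (- u) ^ Suc j)"
    using x unfolding x_def[symmetric] by (simp add: summable_geometric)
  have "(\<Sum>j. x ^ Suc j) = x / (1 - x)"
    using x by (simp add: suminf_mult suminf_geometric summable_geometric)
  also have "\<dots> = 1 / (exp u - 1)"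
    using x by (simp add: x_def exp_minus field_simps)
  also have "\<dots> \<le> 1 / u"
    using assms exp_ge_add_one_self[of u] by (intro divide_left_mono) (auto simp: algebra_simps)
  finally show "(\<Sum>j. exp (- u) ^ Suc j) \<le> 1 / u" unfolding x_def .
qed

lemma scaled_cdf_le_powr:
  fixes F :: "real \<Rightarrow> real"
  assumes mono: "mono F" and F_le_1: "\<And>x. F x \<le> 1" and F_nonneg: "\<And>x. 0 \<le> F x"
    and subpower: "\<And>m y. m \<ge> 1 \<Longrightarrow> F (y / real m powr (1/\<beta>)) \<le> F y ^ m"
    and "\<beta> > 0" "y0 > 0" "s > 0" "0 < q" "q < 1" "F y0 \<le> q"
  shows "F (s / real k powr (1/\<beta>)) \<le> q powr (real k * (y0 / s) powr \<beta> - 1)"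
proof -
  define r where "r = (y0 / s) powr \<beta>"
  have "r > 0" using assms unfolding r_def by simp
  define m where "m = nat \<lfloor>real k * r\<rfloor>"
  have m_le: "real m \<le> real k * r" and m_gt: "real k * r - 1 < real m"
    using \<open>r > 0\<close> by (auto simp: m_def)
  show ?thesis
  proof (cases "m = 0")
    case True
    then have "q powr 0 \<le> q powr (real k * r - 1)"
      using m_gt assms by (intro powr_mono') auto
    with assms show ?thesis unfolding r_def using F_le_1 order_trans by fastforce
  next
    case False
    then have "m \<ge> 1" by simp
    then have "k > 0" using m_le by (cases k) auto
    have "real m powr (1/\<beta>) \<le> (real k * r) powr (1/\<beta>)"
      using m_le assms by (intro powr_mono2) auto
    also have "\<dots> = real k powr (1/\<beta>) * (y0 / s)"
      using assms by (simp add: r_def powr_mult powr_powr)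
    finally have "s / real k powr (1/\<beta>) \<le> y0 / real m powr (1/\<beta>)"
      using \<open>m \<ge> 1\<close> \<open>k > 0\<close> assms by (simp add: field_simps)
    then have "F (s / real k powr (1/\<beta>)) \<le> F (y0 / real m powr (1/\<beta>))"
      by (rule monoD[OF mono])
    also have "\<dots> \<le> F y0 ^ m" by (rule subpower[OF \<open>m \<ge> 1\<close>])
    also have "\<dots> \<le> q ^ m" using assms F_nonneg by (intro power_mono) auto
    also have "\<dots> = q powr real m" using assms by (simp add: powr_realpow)
    also have "\<dots> \<le> q powr (real k * r - 1)"
      using m_gt assms by (intro powr_mono') auto
    finally show ?thesis unfolding r_def .
  qed
qed

lemma scaled_cdf_zero:
  fixes F :: "real \<Rightarrow> real"
  assumes mono: "mono F" and F_nonneg: "\<And>x. 0 \<le> F x"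
    and subpower: "\<And>m y. m \<ge> 1 \<Longrightarrow> F (y / real m powr (1/\<beta>)) \<le> F y ^ m"
    and "y0 > 0" "F y0 < 1"
  shows "F 0 = 0"
proof -
  have "F 0 \<le> F 0 ^ 2" using subpower[of 2 0] by simp
  moreover have "F 0 < 1" using monoD[OF mono, of 0 y0] assms by simp
  ultimately show ?thesis using F_nonneg[of 0] by (simp add: power2_eq_square mult_le_cancel_left1)
qed

lemma suminf_scaled_cdf_le:
  fixes F :: "real \<Rightarrow> real"
  assumes mono: "mono F" and F_le_1: "\<And>x. F x \<le> 1" and F_nonneg: "\<And>x. 0 \<le> F x"
    and subpower: "\<And>m y. m \<ge> 1 \<Longrightarrow> F (y / real m powr (1/\<beta>)) \<le> F y ^ m"
    and "\<beta> > 0" "y0 > 0" "s > 0" "0 < q" "q < 1" "F y0 \<le> q"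
  shows "(\<Sum>j. ennreal (F (s / real (Suc j) powr (1/\<beta>))))
    \<le> ennreal (s powr \<beta> / (q * - ln q * y0 powr \<beta>))"
proof -
  define a where "a = - ln q"
  have "a > 0" using assms unfolding a_def by simp
  define u where "u = a * (y0 / s) powr \<beta>"
  have "u > 0" using \<open>a > 0\<close> assms unfolding u_def by simp
  have term_le: "F (s / real (Suc j) powr (1/\<beta>)) \<le> exp a * exp (- u) ^ Suc j" for j
  proof -
    have "F (s / real (Suc j) powr (1/\<beta>)) \<le> q powr (real (Suc j) * (y0 / s) powr \<beta> - 1)"
      using assms by (intro scaled_cdf_le_powr[OF mono F_le_1 F_nonneg subpower])
    also have "\<dots> = exp (a + real (Suc j) * - u)"
      using assms by (simp add: powr_def a_def u_def algebra_simps)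
    also have "\<dots> = exp a * exp (- u) ^ Suc j"
      by (simp only: exp_add exp_of_nat_mult)
    finally show ?thesis .
  qed
  have "(\<Sum>j. ennreal (F (s / real (Suc j) powr (1/\<beta>)))) \<le> (\<Sum>j. ennreal (exp a * exp (- u) ^ Suc j))"
    by (intro suminf_le ennreal_leI term_le) auto
  also have "\<dots> = ennreal (exp a * (\<Sum>j. exp (- u) ^ Suc j))"
    using suminf_exp_power_le(1)[OF \<open>u > 0\<close>]
    by (simp add: suminf_ennreal2 summable_mult suminf_mult)
  also have "\<dots> \<le> ennreal (exp a * (1 / u))"
    using suminf_exp_power_le(2)[OF \<open>u > 0\<close>] by (intro ennreal_leI mult_left_mono) auto
  also have "exp a * (1 / u) = s powr \<beta> / (q * - ln q * y0 powr \<beta>)"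
    using \<open>a > 0\<close> assms by (simp add: a_def u_def powr_divide exp_minus field_simps)
  finally show ?thesis .
qed

lemma suminf_scaled_cdf_le_powr:
  fixes F :: "real \<Rightarrow> real"
  assumes mono: "mono F" and F_le_1: "\<And>x. F x \<le> 1" and F_nonneg: "\<And>x. 0 \<le> F x"
    and subpower: "\<And>m y. m \<ge> 1 \<Longrightarrow> F (y / real m powr (1/\<beta>)) \<le> F y ^ m"
    and "\<beta> > 0" and y0: "y0 > 0" "F y0 < 1"
  shows "\<exists>C\<ge>0. \<forall>s\<ge>0. (\<Sum>j. ennreal (F (s / real (Suc j) powr (1/\<beta>)))) \<le> ennreal (C * s powr \<beta>)"
proof -
  define q where "q = max (F y0) (1/2)"
  have q: "0 < q" "q < 1" "F y0 \<le> q" using assms unfolding q_def by auto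
  define C where "C = 1 / (q * - ln q * y0 powr \<beta>)"
  have "q * - ln q * y0 powr \<beta> > 0" using q assms by (intro mult_pos_pos) auto
  then have "C \<ge> 0" unfolding C_def by simp
  moreover have "(\<Sum>j. ennreal (F (s / real (Suc j) powr (1/\<beta>)))) \<le> ennreal (C * s powr \<beta>)"
    if "s \<ge> 0" for s
  proof (cases "s = 0")
    case True
    have "F 0 = 0" by (rule scaled_cdf_zero[OF mono F_nonneg subpower y0])
    with True show ?thesis by simp
  next
    case False
    with that have "s > 0" by simp
    have "(\<Sum>j. ennreal (F (s / real (Suc j) powr (1/\<beta>))))
        \<le> ennreal (s powr \<beta> / (q * - ln q * y0 powr \<beta>))"
      by (rule suminf_scaled_cdf_le[OF mono F_le_1 F_nonneg subpower \<open>\<beta> > 0\<close> y0(1) \<open>s > 0\<close> q])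
    also have "s powr \<beta> / (q * - ln q * y0 powr \<beta>) = C * s powr \<beta>"
      by (simp add: C_def)
    finally show ?thesis .
  qed
  ultimately show ?thesis by blast
qed

lemma (in prob_space) borel_measurable_partial_sum:
  assumes "\<And>i. i \<ge> 1 \<Longrightarrow> \<tau> i \<in> borel_measurable M"
  shows "partial_sum \<tau> k \<in> borel_measurable M"
  unfolding partial_sum_def using assms by (auto intro!: borel_measurable_sum)

lemma (in prob_space) distr_partial_sum:
  assumes indep: "indep_vars (\<lambda>_. borel) \<tau> {1..}"
    and ident: "\<And>i. i \<ge> 1 \<Longrightarrow> distr M borel (\<tau> i) = distr M borel (\<tau> 1)"
  shows "distr M borel (partial_sum \<tau> k) = conv_pow (distr M borel (\<tau> 1)) k"
proof (induction k)
  case 0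
  have "partial_sum \<tau> 0 = (\<lambda>_. 0)" by (simp add: partial_sum_def fun_eq_iff)
  then show ?case by simp
next
  case (Suc k)
  have meas: "\<And>i. i \<ge> 1 \<Longrightarrow> \<tau> i \<in> borel_measurable M"
    using indep unfolding indep_vars_def by auto
  have split: "partial_sum \<tau> (Suc k) = (\<lambda>\<omega>. \<tau> (Suc k) \<omega> + partial_sum \<tau> k \<omega>)"
    by (simp add: partial_sum_def fun_eq_iff add.commute)
  have "indep_vars (\<lambda>_. borel) \<tau> (insert (Suc k) {1..k})"
    by (rule indep_vars_subset[OF indep]) auto
  then have "indep_var borel (\<tau> (Suc k)) borel (partial_sum \<tau> k)"
    unfolding partial_sum_def by (intro indep_vars_sum) auto
  then have "distr M borel (partial_sum \<tau> (Suc k))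
      = convolution (distr M borel (\<tau> (Suc k))) (distr M borel (partial_sum \<tau> k))"
    unfolding split
    by (rule sum_indep_random_variable) (auto intro: meas borel_measurable_partial_sum)
  then show ?case using Suc ident[of "Suc k"] by simp
qed

lemma (in prob_space) prob_le_of_distr_eq_scaled:
  fixes X Y :: "'a \<Rightarrow> real"
  assumes "X \<in> borel_measurable M" "Y \<in> borel_measurable M" "c > 0"
    and "distr M borel X = distr (distr M borel Y) borel (\<lambda>x. c * x)"
  shows "prob {\<omega>\<in>space M. X \<omega> \<le> s} = prob {\<omega>\<in>space M. Y \<omega> \<le> s / c}"
proof -
  have "prob {\<omega>\<in>space M. X \<omega> \<le> s} = measure (distr M borel X) {..s}"
    using assms by (subst measure_distr) (auto intro!: arg_cong[where f=prob])
  also have "\<dots> = measure (distr M borel Y) ((\<lambda>x. c * x) -` {..s})"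
    unfolding assms(4) by (subst measure_distr) auto
  also have "(\<lambda>x. c * x) -` {..s} = {..s / c}"
    using assms by (auto simp: field_simps)
  also have "measure (distr M borel Y) {..s / c} = prob {\<omega>\<in>space M. Y \<omega> \<le> s / c}"
    using assms by (subst measure_distr) (auto intro!: arg_cong[where f=prob])
  finally show ?thesis .
qed

lemma (in prob_space) prob_partial_sum_le_stable:
  assumes indep: "indep_vars (\<lambda>_. borel) \<tau> {1..}"
    and ident: "\<And>i. i \<ge> 1 \<Longrightarrow> distr M borel (\<tau> i) = distr M borel (\<tau> 1)"
    and stable: "strictly_stable \<beta> (distr M borel (\<tau> 1))" and "k \<ge> 1"
  shows "prob {\<omega>\<in>space M. partial_sum \<tau> k \<omega> \<le> s}
       = prob {\<omega>\<in>space M. \<tau> 1 \<omega> \<le> s / real k powr (1/\<beta>)}"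
proof (rule prob_le_of_distr_eq_scaled)
  have meas: "\<And>i. i \<ge> 1 \<Longrightarrow> \<tau> i \<in> borel_measurable M"
    using indep unfolding indep_vars_def by auto
  then show "partial_sum \<tau> k \<in> borel_measurable M" "\<tau> 1 \<in> borel_measurable M"
    by (auto intro: borel_measurable_partial_sum)
  show "real k powr (1/\<beta>) > 0" using \<open>k \<ge> 1\<close> by simp
  show "distr M borel (partial_sum \<tau> k)
      = distr (distr M borel (\<tau> 1)) borel (\<lambda>x. real k powr (1/\<beta>) * x)"
    using stable \<open>k \<ge> 1\<close> by (simp add: distr_partial_sum[OF indep ident] strictly_stable_def)
qed

lemma (in prob_space) prob_partial_sum_le_power:
  assumes indep: "indep_vars (\<lambda>_. borel) \<tau> {1..}"
    and ident: "\<And>i. i \<ge> 1 \<Longrightarrow> distr M borel (\<tau> i) = distr M borel (\<tau> 1)"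
    and nonneg: "\<And>i. i \<ge> 1 \<Longrightarrow> AE \<omega> in M. \<tau> i \<omega> \<ge> 0" and "k \<ge> 1"
  shows "prob {\<omega>\<in>space M. partial_sum \<tau> k \<omega> \<le> s} \<le> prob {\<omega>\<in>space M. \<tau> 1 \<omega> \<le> s} ^ k"
proof -
  have meas: "\<And>i. i \<ge> 1 \<Longrightarrow> \<tau> i \<in> borel_measurable M"
    using indep unfolding indep_vars_def by auto
  define A where "A i = \<tau> i -` {..s} \<inter> space M" for i
  have "AE \<omega> in M. \<forall>i\<ge>1. \<tau> i \<omega> \<ge> 0"
    using nonneg by (subst AE_all_countable) auto
  \<comment> \<open>With nonnegative summands, a small sum forces every summand to be small.\<close>
  then have "AE \<omega> in M. \<omega> \<in> {\<omega>\<in>space M. partial_sum \<tau> k \<omega> \<le> s} \<longrightarrow> \<omega> \<in> (\<Inter>i\<in>{1..k}. A i)"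
  proof eventually_elim
    case (elim \<omega>)
    show ?case
    proof
      assume \<omega>: "\<omega> \<in> {\<omega>\<in>space M. partial_sum \<tau> k \<omega> \<le> s}"
      have "\<tau> i \<omega> \<le> s" if "i \<in> {1..k}" for i
      proof -
        have "\<tau> i \<omega> \<le> partial_sum \<tau> k \<omega>"
          unfolding partial_sum_def using that elim by (intro member_le_sum) auto
        with \<omega> show ?thesis by simp
      qed
      with \<omega> show "\<omega> \<in> (\<Inter>i\<in>{1..k}. A i)" by (auto simp: A_def)
    qed
  qed
  then have "prob {\<omega>\<in>space M. partial_sum \<tau> k \<omega> \<le> s} \<le> prob (\<Inter>i\<in>{1..k}. A i)"
    using \<open>k \<ge> 1\<close> meas unfolding A_def by (intro finite_measure_mono_AE) auto
  also have "\<dots> = (\<Prod>i\<in>{1..k}. prob (A i))"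
    unfolding A_def using \<open>k \<ge> 1\<close> by (intro indep_varsD[OF indep]) auto
  also have "\<dots> = (\<Prod>i\<in>{1..k}. prob {\<omega>\<in>space M. \<tau> 1 \<omega> \<le> s})"
  proof (rule prod.cong[OF refl])
    fix i assume "i \<in> {1..k}"
    then have "prob (A i) = measure (distr M borel (\<tau> i)) {..s}"
      unfolding A_def using meas by (subst measure_distr) auto
    also have "\<dots> = measure (distr M borel (\<tau> 1)) {..s}" using ident[of i] \<open>i \<in> {1..k}\<close> by simp
    also have "\<dots> = prob {\<omega>\<in>space M. \<tau> 1 \<omega> \<le> s}"
      using meas[of 1] by (subst measure_distr) (auto intro!: arg_cong[where f=prob])
    finally show "prob (A i) = prob {\<omega>\<in>space M. \<tau> 1 \<omega> \<le> s}" .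
  qed
  finally show ?thesis by simp
qed

lemma (in prob_space) exists_prob_le_less_1:
  fixes X :: "'a \<Rightarrow> real"
  assumes "X \<in> borel_measurable M" "AE \<omega> in M. X \<omega> \<ge> 0" "distr M borel X \<noteq> return borel 0"
  shows "\<exists>y>0. prob {\<omega>\<in>space M. X \<omega> \<le> y} < 1"
proof (rule ccontr)
  assume no_level: "\<not> ?thesis"
  have "AE \<omega> in M. X \<omega> \<le> 1 / Suc j" for j :: nat
  proof -
    have "\<not> prob {\<omega>\<in>space M. X \<omega> \<le> 1 / Suc j} < 1"
      using no_level by simp
    then have "prob {\<omega>\<in>space M. X \<omega> \<le> 1 / Suc j} = 1"
      using prob_le_1 by (meson antisym not_less)
    from AE_prob_1[OF this] show ?thesis by eventually_elim simp
  qed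
  then have "AE \<omega> in M. \<forall>j::nat. X \<omega> \<le> 1 / Suc j"
    by (simp add: AE_all_countable)
  with assms(2) have "AE \<omega> in M. X \<omega> = 0"
  proof eventually_elim
    case (elim \<omega>)
    show ?case
    proof (rule ccontr)
      assume "X \<omega> \<noteq> 0"
      with elim(1) have "X \<omega> > 0" by simp
      then obtain j where "inverse (real (Suc j)) < X \<omega>"
        using reals_Archimedean by blast
      then show False using elim(2)[rule_format, of j] by (simp add: field_simps)
    qed
  qed
  then have "distr M borel X = distr M borel (\<lambda>_. 0)"
    using assms(1) by (intro distr_cong_AE) simp_all
  with assms(3) show False by simp
qed

lemma count_proc_le_suminf:
  assumes "\<And>i. i \<ge> 1 \<Longrightarrow> \<tau> i \<omega> \<ge> 0"
  shows "ennreal_of_enat (count_proc \<tau> s \<omega>) \<le> (\<Sum>j. of_bool (partial_sum \<tau> (Suc j) \<omega> \<le> s))"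
  unfolding count_proc_def ennreal_of_enat_Sup
proof (rule Sup_least)
  fix x assume "x \<in> ennreal_of_enat ` {enat n |n. partial_sum \<tau> n \<omega> \<le> s}"
  then obtain n where x: "x = of_nat n" and n: "partial_sum \<tau> n \<omega> \<le> s"
    by auto
  \<comment> \<open>Nonnegative summands make the partial sums monotone.\<close>
  have "partial_sum \<tau> (Suc j) \<omega> \<le> s" if "j < n" for j
  proof -
    have "partial_sum \<tau> (Suc j) \<omega> \<le> partial_sum \<tau> n \<omega>"
      unfolding partial_sum_def using that assms by (intro sum_mono2) auto
    with n show ?thesis by simp
  qed
  then have "x = (\<Sum>j<n. of_bool (partial_sum \<tau> (Suc j) \<omega> \<le> s))" using x by simp
  also have "\<dots> \<le> (\<Sum>j. of_bool (partial_sum \<tau> (Suc j) \<omega> \<le> s))"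
    by (rule sum_le_suminf) auto
  finally show "x \<le> (\<Sum>j. of_bool (partial_sum \<tau> (Suc j) \<omega> \<le> s))" .
qed

text \<open>The normalising factor \<open>c\<close> stays inside the integral, which avoids proving that
  \<open>count_proc\<close> is measurable.\<close>

lemma (in prob_space) nn_integral_count_proc_divide_le:
  assumes meas: "\<And>i. i \<ge> 1 \<Longrightarrow> \<tau> i \<in> borel_measurable M"
    and nonneg: "\<And>i. i \<ge> 1 \<Longrightarrow> AE \<omega> in M. \<tau> i \<omega> \<ge> 0"
  shows "(\<integral>\<^sup>+\<omega>. ennreal_of_enat (count_proc \<tau> s \<omega>) / c \<partial>M)
     \<le> (\<Sum>j. ennreal (prob {\<omega>\<in>space M. partial_sum \<tau> (Suc j) \<omega> \<le> s})) / c"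
proof -
  define B where "B j = {\<omega>\<in>space M. partial_sum \<tau> (Suc j) \<omega> \<le> s}" for j
  have B_sets: "B j \<in> sets M" for j
    unfolding B_def using borel_measurable_partial_sum[OF meas] by measurable
  have "AE \<omega> in M. \<forall>i\<ge>1. \<tau> i \<omega> \<ge> 0"
    using nonneg by (subst AE_all_countable) auto
  with AE_space have "AE \<omega> in M. ennreal_of_enat (count_proc \<tau> s \<omega>) / c \<le> (\<Sum>j. indicator (B j) \<omega>) / c"
  proof eventually_elim
    case (elim \<omega>)
    then have "indicator (B j) \<omega> = (of_bool (partial_sum \<tau> (Suc j) \<omega> \<le> s) :: ennreal)" for j
      by (simp add: B_def indicator_def)
    with elim show ?case
      by (simp add: count_proc_le_suminf divide_right_mono_ennreal)
  qed
  then have "(\<integral>\<^sup>+\<omega>. ennreal_of_enat (count_proc \<tau> s \<omega>) / c \<partial>M) \<le> (\<integral>\<^sup>+\<omega>. (\<Sum>j. indicator (B j) \<omega>) / c \<partial>M)"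
    by (rule nn_integral_mono_AE)
  also have "\<dots> = (\<integral>\<^sup>+\<omega>. (\<Sum>j. indicator (B j) \<omega>) \<partial>M) / c"
    by (rule nn_integral_divide) (use B_sets in measurable)
  also have "(\<integral>\<^sup>+\<omega>. (\<Sum>j. indicator (B j) \<omega>) \<partial>M) = (\<Sum>j. ennreal (prob (B j)))"
    using B_sets by (simp add: nn_integral_suminf emeasure_eq_measure)
  finally show ?thesis unfolding B_def .
qed

lemma (in prob_space) nn_integral_count_proc_le_powr:
  assumes indep: "indep_vars (\<lambda>_. borel) \<tau> {1..}"
    and ident: "\<And>i. i \<ge> 1 \<Longrightarrow> distr M borel (\<tau> i) = distr M borel (\<tau> 1)"
    and nonneg: "\<And>i. i \<ge> 1 \<Longrightarrow> AE \<omega> in M. \<tau> i \<omega> \<ge> 0"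
    and stable: "strictly_stable \<beta> (distr M borel (\<tau> 1))" and "\<beta> > 0"
  shows "\<exists>C\<ge>0. \<forall>s\<ge>0. \<forall>c.
    (\<integral>\<^sup>+\<omega>. ennreal_of_enat (count_proc \<tau> s \<omega>) / c \<partial>M) \<le> ennreal (C * s powr \<beta>) / c"
proof -
  have meas: "\<And>i. i \<ge> 1 \<Longrightarrow> \<tau> i \<in> borel_measurable M"
    using indep unfolding indep_vars_def by auto
  define F where "F x = prob {\<omega>\<in>space M. \<tau> 1 \<omega> \<le> x}" for x
  have partial_sum_cdf: "prob {\<omega>\<in>space M. partial_sum \<tau> k \<omega> \<le> s} = F (s / real k powr (1/\<beta>))"
    if "k \<ge> 1" for k s
    unfolding F_def by (rule prob_partial_sum_le_stable[OF indep ident stable that])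
  have F_nonneg: "0 \<le> F x" and F_le_1: "F x \<le> 1" for x
    unfolding F_def by auto
  have "mono F"
    unfolding F_def mono_def using meas[OF order_refl] by (auto intro!: finite_measure_mono)
  have subpower: "F (y / real m powr (1/\<beta>)) \<le> F y ^ m" if "m \<ge> 1" for m y
    using prob_partial_sum_le_power[OF indep ident nonneg that, of y]
    unfolding partial_sum_cdf[OF that] F_def .
  obtain y0 where "y0 > 0" "F y0 < 1"
    using exists_prob_le_less_1[OF meas[OF order_refl] nonneg[OF order_refl]] stable
    unfolding F_def strictly_stable_def by blast
  then obtain C where "C \<ge> 0"
    and C: "\<And>s. s \<ge> 0 \<Longrightarrow> (\<Sum>j. ennreal (F (s / real (Suc j) powr (1/\<beta>)))) \<le> ennreal (C * s powr \<beta>)"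
    using suminf_scaled_cdf_le_powr[OF \<open>mono F\<close> F_le_1 F_nonneg subpower \<open>\<beta> > 0\<close>] by blast
  have "(\<integral>\<^sup>+\<omega>. ennreal_of_enat (count_proc \<tau> s \<omega>) / c \<partial>M) \<le> ennreal (C * s powr \<beta>) / c"
    if "s \<ge> 0" for s c
  proof -
    have "(\<integral>\<^sup>+\<omega>. ennreal_of_enat (count_proc \<tau> s \<omega>) / c \<partial>M)
        \<le> (\<Sum>j. ennreal (prob {\<omega>\<in>space M. partial_sum \<tau> (Suc j) \<omega> \<le> s})) / c"
      by (rule nn_integral_count_proc_divide_le[OF meas nonneg])
    also have "\<dots> = (\<Sum>j. ennreal (F (s / real (Suc j) powr (1/\<beta>)))) / c"
      using partial_sum_cdf[of "Suc _"] by (simp only: Suc_le_mono le0 simp_thms)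
    also have "\<dots> \<le> ennreal (C * s powr \<beta>) / c"
      using that by (intro divide_right_mono_ennreal C)
    finally show ?thesis .
  qed
  with \<open>C \<ge> 0\<close> show ?thesis by blast
qed

theorem lemma3p4:
  fixes M :: "'a measure" and \<tau> :: "nat \<Rightarrow> 'a \<Rightarrow> real" and \<beta> :: real
  assumes "prob_space M"
    and "0 < \<beta>" and "\<beta> < 1"
    and "prob_space.indep_vars M (\<lambda>_. borel) \<tau> {1..}"
    and "\<And>i. i \<ge> 1 \<Longrightarrow> distr M borel (\<tau> i) = distr M borel (\<tau> 1)"
    and "\<And>i. i \<ge> 1 \<Longrightarrow> AE \<omega> in M. \<tau> i \<omega> \<ge> 0"
    and "strictly_stable \<beta> (distr M borel (\<tau> 1))"
  shows "\<exists>C::real. \<forall>t\<ge>0. \<forall>n::nat\<ge>1.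
    (\<integral>\<^sup>+ \<omega>. ennreal_of_enat (count_proc \<tau> (real n * t) \<omega>) / ennreal (real n powr \<beta>) \<partial>M)
      \<le> ennreal (t powr \<beta> * C)"
proof -
  interpret prob_space M by fact
  obtain C where "C \<ge> 0" and C: "\<And>s c. s \<ge> 0 \<Longrightarrow>
      (\<integral>\<^sup>+\<omega>. ennreal_of_enat (count_proc \<tau> s \<omega>) / c \<partial>M) \<le> ennreal (C * s powr \<beta>) / c"
    using nn_integral_count_proc_le_powr[OF assms(4-7,2)] by blast
  show ?thesis
  proof (intro exI[of _ C] allI impI)
    fix t :: real and n :: nat
    assume "t \<ge> 0" "n \<ge> 1"
    have "(\<integral>\<^sup>+ \<omega>. ennreal_of_enat (count_proc \<tau> (real n * t) \<omega>) / ennreal (real n powr \<beta>) \<partial>M)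
        \<le> ennreal (C * (real n * t) powr \<beta>) / ennreal (real n powr \<beta>)"
      using \<open>t \<ge> 0\<close> by (intro C) simp
    also have "\<dots> = ennreal (t powr \<beta> * C)"
      using \<open>t \<ge> 0\<close> \<open>n \<ge> 1\<close> \<open>C \<ge> 0\<close> by (simp add: divide_ennreal powr_mult)
    finally show "(\<integral>\<^sup>+ \<omega>. ennreal_of_enat (count_proc \<tau> (real n * t) \<omega>) / ennreal (real n powr \<beta>) \<partial>M)
      \<le> ennreal (t powr \<beta> * C)" .
  qed
qed

end
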